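(* Let $G=\mathrm{SL}_2(\mathbb{C})\times\dots\times\mathrm{SL}_2(\mathbb{C})$ be a product of finitely many copies of $\mathrm{SL}_2(\mathbb{C})$, and let $\Gamma,\Gamma'$ be mutually commensurable lattices in $G$. Then for any subgroup $F$ of $G$, the set $E(F)=\{x:Fx\text{ is bounded}\}$ is HAW in $G/\Gamma$ if and only if the corresponding set $E(F)$ is HAW in $G/\Gamma'$.
   Context: Lattices $\Gamma,\Gamma'$ are commensurable if $\Gamma\cap\Gamma'$ has finite index in both. "Bounded" means relatively compact. $G/\Gamma$ is a complex manifold. HAW (hyperplane-absolute-winning): in $\mathbb{C}^d$, for $0<\beta<1/3$ Player B picks a closed ball $B_0$; after B's closed ball $B_j$ of radius $\rho_j$, A picks the open $\delta_j$-neighborhood of a complex affine hyperplane with $\delta_j\le\beta\rho_j$, and B picks a closed ball $B_{j+1}\subset B_j$ disjoint from it of radius $\ge\beta\rho_j$; $E$ is HAW if for every $\beta\in(0,1/3)$ A can force $E\cap\bigcap_jB_j\ne\emptyset$ (on an open $\Omega$, require $B_0\subset\Omega$). A subset of a complex manifold is HAW if its image in every holomorphic chart is HAW on the chart's image. *)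

theory Defs
  imports "HOL-Analysis.Analysis" "HOL-Probability.Probability"
begin

type_synonym 'k grp = "complex^2^2^'k"
type_synonym 'k cvec = "complex^3^'k"      \<comment> \<open>C^(3k), the model space of G/Gamma\<close>

text \<open>G = SL_2(C) x ... x SL_2(C)  (CARD('k) copies), sitting inside C^(4k).\<close>
definition SLprod :: "'k::finite grp set" where
  "SLprod = {g. \<forall>i. det (g$i) = 1}"

definition gmul :: "'k::finite grp \<Rightarrow> 'k grp \<Rightarrow> 'k grp" where
  "gmul g h = (\<chi> i. g$i ** h$i)"

definition gone :: "'k::finite grp" where
  "gone = (\<chi> i. mat 1)"

definition is_subgroup :: "'k::finite grp set \<Rightarrow> bool" where
  "is_subgroup H \<longleftrightarrow> H \<subseteq> SLprod \<and> gone \<in> H \<and> (\<forall>x\<in>H. \<forall>y\<in>H. gmul x y \<in> H)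
     \<and> (\<forall>x\<in>H. \<exists>y\<in>H. gmul x y = gone)"

definition lcoset :: "'k::finite grp \<Rightarrow> 'k grp set \<Rightarrow> 'k grp set" where
  "lcoset g H = gmul g ` H"

definition quot :: "'k::finite grp set \<Rightarrow> 'k grp set set" where
  "quot \<Gamma> = {lcoset g \<Gamma> | g. g \<in> SLprod}"

definition qtop :: "'k::finite grp set \<Rightarrow> 'k grp set topology" where
  "qtop \<Gamma> = topology (\<lambda>U. U \<subseteq> quot \<Gamma> \<and>
      openin (top_of_set SLprod) {g \<in> SLprod. lcoset g \<Gamma> \<in> U})"

definition act :: "'k::finite grp \<Rightarrow> 'k grp set \<Rightarrow> 'k grp set" where
  "act g x = gmul g ` x"

definition discrete_subgroup :: "'k::finite grp set \<Rightarrow> bool" where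
  "discrete_subgroup \<Gamma> \<longleftrightarrow> is_subgroup \<Gamma> \<and>
     (\<forall>\<gamma>\<in>\<Gamma>. \<exists>e>0. \<forall>\<gamma>'\<in>\<Gamma>. dist \<gamma>' \<gamma> < e \<longrightarrow> \<gamma>' = \<gamma>)"

definition lattice :: "'k::finite grp set \<Rightarrow> bool" where
  "lattice \<Gamma> \<longleftrightarrow> discrete_subgroup \<Gamma> \<and>
     (\<exists>\<mu> :: 'k grp set measure.
        space \<mu> = quot \<Gamma> \<and>
        sets \<mu> = sigma_sets (quot \<Gamma>) {U. openin (qtop \<Gamma>) U} \<and>
        0 < emeasure \<mu> (quot \<Gamma>) \<and> emeasure \<mu> (quot \<Gamma>) < \<infinity> \<and>
        (\<forall>g\<in>SLprod. \<forall>A\<in>sets \<mu>. emeasure \<mu> (act g ` A) = emeasure \<mu> A))"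

definition finite_index :: "'k::finite grp set \<Rightarrow> 'k grp set \<Rightarrow> bool" where
  "finite_index H K \<longleftrightarrow> finite {lcoset g H | g. g \<in> K}"   \<comment> \<open>[K : H] finite\<close>

definition commensurable :: "'k::finite grp set \<Rightarrow> 'k grp set \<Rightarrow> bool" where
  "commensurable \<Gamma> \<Gamma>' \<longleftrightarrow> finite_index (\<Gamma> \<inter> \<Gamma>') \<Gamma> \<and> finite_index (\<Gamma> \<inter> \<Gamma>') \<Gamma>'"

definition Ebdd :: "'k::finite grp set \<Rightarrow> 'k grp set \<Rightarrow> 'k grp set set" where
  "Ebdd F \<Gamma> = {x \<in> quot \<Gamma>. compactin (qtop \<Gamma>) ((qtop \<Gamma>) closure_of ((\<lambda>f. act f x) ` F))}"

definition csv :: "complex \<Rightarrow> 'k::finite cvec \<Rightarrow> 'k cvec" where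
  "csv c v = (\<chi> i j. c * v$i$j)"

definition csg :: "complex \<Rightarrow> 'k::finite grp \<Rightarrow> 'k grp" where
  "csg c m = (\<chi> i j l. c * m$i$j$l)"

definition holo_vg :: "'k::finite cvec set \<Rightarrow> ('k cvec \<Rightarrow> 'k grp) \<Rightarrow> bool" where
  "holo_vg W h \<longleftrightarrow> (\<forall>z\<in>W. \<exists>h'. (h has_derivative h') (at z) \<and> (\<forall>c v. h' (csv c v) = csg c (h' v)))"

definition holo_gv :: "'k::finite grp set \<Rightarrow> ('k grp \<Rightarrow> 'k cvec) \<Rightarrow> bool" where
  "holo_gv Ob H \<longleftrightarrow> (\<forall>z\<in>Ob. \<exists>H'. (H has_derivative H') (at z) \<and> (\<forall>c v. H' (csg c v) = csv c (H' v)))"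

text \<open>Holomorphic chart of G/Gamma, given by its inverse psi : V -> G/Gamma (V open in C^(3k)):
  psi is a homeomorphism onto an open set which is holomorphic (locally lifts to
  holomorphic maps into G) with holomorphic inverse (psi^-1 o pi locally extends to
  a holomorphic map on an open subset of the ambient C^(4k)).\<close>
definition is_chart :: "'k::finite grp set \<Rightarrow> 'k cvec set \<Rightarrow> ('k cvec \<Rightarrow> 'k grp set) \<Rightarrow> bool" where
  "is_chart \<Gamma> V \<psi> \<longleftrightarrow> open V \<and> inj_on \<psi> V \<and> \<psi> ` V \<subseteq> quot \<Gamma> \<and> openin (qtop \<Gamma>) (\<psi> ` V) \<and>
     (\<forall>z\<in>V. \<exists>W h. open W \<and> z \<in> W \<and> W \<subseteq> V \<and> holo_vg W h \<and> h ` W \<subseteq> SLprod \<and>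
         (\<forall>w\<in>W. \<psi> w = lcoset (h w) \<Gamma>)) \<and>
     (\<forall>g\<in>SLprod. lcoset g \<Gamma> \<in> \<psi> ` V \<longrightarrow>
        (\<exists>Ob H. open Ob \<and> g \<in> Ob \<and> holo_gv Ob H \<and>
           (\<forall>g'\<in>Ob \<inter> SLprod. lcoset g' \<Gamma> \<in> \<psi> ` V \<longrightarrow> H g' \<in> V \<and> \<psi> (H g') = lcoset g' \<Gamma>)))"

definition cdot :: "'k::finite cvec \<Rightarrow> 'k cvec \<Rightarrow> complex" where
  "cdot a z = (\<Sum>i\<in>UNIV. \<Sum>j\<in>UNIV. a$i$j * z$i$j)"

definition hnbhd :: "'k::finite cvec \<Rightarrow> complex \<Rightarrow> real \<Rightarrow> 'k cvec set" where
  "hnbhd a c \<delta> = {z. infdist z {w. cdot a w = c} < \<delta>}"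

text \<open>A strategy for A maps the history of B's balls (center, radius) to (a, c, delta).\<close>
definition legal_strategy :: "real \<Rightarrow> (('k::finite cvec \<times> real) list \<Rightarrow> 'k cvec \<times> complex \<times> real) \<Rightarrow> bool" where
  "legal_strategy \<beta> \<sigma> \<longleftrightarrow> (\<forall>hist. hist \<noteq> [] \<longrightarrow> snd (last hist) > 0 \<longrightarrow>
     (case \<sigma> hist of (a, c, \<delta>) \<Rightarrow> a \<noteq> 0 \<and> 0 < \<delta> \<and> \<delta> \<le> \<beta> * snd (last hist)))"

definition consistent_play :: "'k::finite cvec set \<Rightarrow> real \<Rightarrow> (('k cvec \<times> real) list \<Rightarrow> 'k cvec \<times> complex \<times> real)
     \<Rightarrow> (nat \<Rightarrow> 'k cvec \<times> real) \<Rightarrow> bool" where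
  "consistent_play \<Omega> \<beta> \<sigma> b \<longleftrightarrow> snd (b 0) > 0 \<and> cball (fst (b 0)) (snd (b 0)) \<subseteq> \<Omega> \<and>
     (\<forall>j. cball (fst (b (Suc j))) (snd (b (Suc j))) \<subseteq> cball (fst (b j)) (snd (b j)) \<and>
          snd (b (Suc j)) \<ge> \<beta> * snd (b j) \<and>
          (case \<sigma> (map b [0..<Suc j]) of (a, c, \<delta>) \<Rightarrow>
             cball (fst (b (Suc j))) (snd (b (Suc j))) \<inter> hnbhd a c \<delta> = {}))"

definition HAW_on :: "'k::finite cvec set \<Rightarrow> 'k cvec set \<Rightarrow> bool" where
  "HAW_on \<Omega> E \<longleftrightarrow> (\<forall>\<beta>. 0 < \<beta> \<and> \<beta> < 1/3 \<longrightarrow>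
     (\<exists>\<sigma>. legal_strategy \<beta> \<sigma> \<and>
        (\<forall>b. consistent_play \<Omega> \<beta> \<sigma> b \<longrightarrow> E \<inter> (\<Inter>j. cball (fst (b j)) (snd (b j))) \<noteq> {})))"

definition HAW_quot :: "'k::finite grp set \<Rightarrow> 'k grp set set \<Rightarrow> bool" where
  "HAW_quot \<Gamma> E \<longleftrightarrow> (\<forall>V \<psi>. is_chart \<Gamma> V \<psi> \<longrightarrow> HAW_on V {z \<in> V. \<psi> z \<in> E})"

end

theory Submission
  imports Defs
begin

text \<open>Only the discreteness of the lattices matters. Both sets \<open>E(F)\<close> are compared through
  \<open>\<Delta> = \<Gamma> \<inter> \<Gamma>'\<close>: since \<open>\<Delta>\<close> has finite index, the natural map \<open>G/\<Delta> \<rightarrow> G/\<Gamma>\<close> is continuous,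
  closed and has finite fibres, hence proper, so an \<open>F\<close>-orbit in \<open>G/\<Delta>\<close> is relatively compact iff
  its image is; thus \<open>E(F)\<close> in \<open>G/\<Delta>\<close> is the preimage of \<open>E(F)\<close> in \<open>G/\<Gamma>\<close>, and likewise for \<open>\<Gamma>'\<close>.
  A holomorphic chart of \<open>G/\<Gamma>\<close> lifts locally to a holomorphic section \<open>h\<close> into \<open>G\<close>; on a ball
  where \<open>g \<mapsto> g\<Gamma>'\<close> is injective, \<open>w \<mapsto> h(w)\<Gamma>'\<close> is a chart of \<open>G/\<Gamma>'\<close>, and both charts pull the
  two sets \<open>E(F)\<close> back to the same set. Finally, being HAW is a local property: A can glue
  local winning strategies.\<close>

section \<open>The group \<open>SL\<^sub>2(\<complex>)\<^sup>k\<close>\<close>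

definition adjugate2 :: "complex^2^2 \<Rightarrow> complex^2^2" where
  "adjugate2 A = (\<chi> j l. if j = 1 then (if l = 1 then A$2$2 else - A$1$2)
                          else (if l = 1 then - A$2$1 else A$1$1))"

text \<open>On \<open>SL\<^sub>2\<close> the inverse is the adjugate, which is linear, so inversion is continuous.\<close>
definition ginv :: "'k::finite grp \<Rightarrow> 'k grp" where
  "ginv g = (\<chi> i. adjugate2 (g$i))"

lemma adjugate2_mult: "det A = 1 \<Longrightarrow> adjugate2 A ** A = mat 1" "det A = 1 \<Longrightarrow> A ** adjugate2 A = mat 1"
  unfolding adjugate2_def
  by (auto simp: vec_eq_iff forall_2 matrix_matrix_mult_def sum_2 det_2 mat_def algebra_simps)

lemma gmul_assoc: "gmul a (gmul b c) = gmul (gmul a b) c"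
  by (simp add: gmul_def matrix_mul_assoc)

lemma gmul_gone [simp]: "gmul gone g = g" "gmul g gone = g"
  by (simp_all add: gmul_def gone_def vec_eq_iff)

lemma gmul_in_SLprod: "a \<in> SLprod \<Longrightarrow> b \<in> SLprod \<Longrightarrow> gmul a b \<in> SLprod"
  by (simp add: SLprod_def gmul_def det_mul)

lemma ginv_cancel: "a \<in> SLprod \<Longrightarrow> gmul (ginv a) a = gone" "a \<in> SLprod \<Longrightarrow> gmul a (ginv a) = gone"
  by (simp_all add: SLprod_def ginv_def gmul_def gone_def adjugate2_mult vec_eq_iff)

lemma subgroup_SLprod: "is_subgroup H \<Longrightarrow> x \<in> H \<Longrightarrow> x \<in> SLprod"
  unfolding is_subgroup_def by blast

lemma subgroup_gone: "is_subgroup H \<Longrightarrow> gone \<in> H"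
  unfolding is_subgroup_def by blast

lemma subgroup_gmul: "is_subgroup H \<Longrightarrow> x \<in> H \<Longrightarrow> y \<in> H \<Longrightarrow> gmul x y \<in> H"
  unfolding is_subgroup_def by blast

lemma subgroup_ginv:
  assumes "is_subgroup H" "x \<in> H"
  shows "ginv x \<in> H"
proof -
  obtain y where y: "y \<in> H" "gmul x y = gone"
    using assms unfolding is_subgroup_def by blast
  have "y = gmul (gmul (ginv x) x) y"
    using subgroup_SLprod[OF assms] by (simp add: ginv_cancel)
  also have "\<dots> = ginv x"
    using y by (simp flip: gmul_assoc)
  finally show ?thesis
    using y by simp
qed

lemma subgroup_Int:
  assumes "is_subgroup H" "is_subgroup K"
  shows "is_subgroup (H \<inter> K)"
  unfolding is_subgroup_def
proof (intro conjI ballI)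
  show "H \<inter> K \<subseteq> SLprod" "gone \<in> H \<inter> K"
    using assms subgroup_SLprod subgroup_gone by auto
  fix x assume x: "x \<in> H \<inter> K"
  show "\<exists>y\<in>H \<inter> K. gmul x y = gone"
    using x assms by (intro bexI[of _ "ginv x"]) (auto simp: ginv_cancel subgroup_SLprod subgroup_ginv)
  fix y assume "y \<in> H \<inter> K"
  then show "gmul x y \<in> H \<inter> K"
    using x assms by (simp add: subgroup_gmul)
qed

lemma subgroup_gmul_image: "is_subgroup H \<Longrightarrow> \<gamma> \<in> H \<Longrightarrow> gmul \<gamma> ` H = H"
proof (intro equalityI subsetI)
  fix h assume H: "is_subgroup H" "\<gamma> \<in> H" and h: "h \<in> H"
  then have "gmul (ginv \<gamma>) h \<in> H" "h = gmul \<gamma> (gmul (ginv \<gamma>) h)"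
    by (simp_all add: subgroup_gmul subgroup_ginv gmul_assoc ginv_cancel subgroup_SLprod)
  then show "h \<in> gmul \<gamma> ` H"
    by (rule rev_image_eqI)
qed (auto simp: subgroup_gmul)

lemma discrete_subgroup_is_subgroup: "discrete_subgroup \<Gamma> \<Longrightarrow> is_subgroup \<Gamma>"
  unfolding discrete_subgroup_def by blast

lemma lcoset_gmul: "is_subgroup H \<Longrightarrow> \<gamma> \<in> H \<Longrightarrow> lcoset (gmul g \<gamma>) H = lcoset g H"
  unfolding lcoset_def
  by (simp add: gmul_assoc [symmetric] image_image [symmetric, of "gmul g" "gmul \<gamma>"]
      subgroup_gmul_image)

lemma lcoset_eq_iff:
  assumes "is_subgroup H"
  shows "lcoset g H = lcoset g' H \<longleftrightarrow> (\<exists>\<gamma>\<in>H. g' = gmul g \<gamma>)"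
proof
  have "g' \<in> lcoset g' H"
    unfolding lcoset_def using subgroup_gone[OF assms] by (rule rev_image_eqI) simp
  then show "\<exists>\<gamma>\<in>H. g' = gmul g \<gamma>" if "lcoset g H = lcoset g' H"
    using that unfolding lcoset_def by blast
qed (auto simp: lcoset_gmul[OF assms])

lemma act_lcoset: "act f (lcoset g H) = lcoset (gmul f g) H"
  unfolding act_def lcoset_def by (auto simp: gmul_assoc image_image)

lemma lcoset_in_quot: "g \<in> SLprod \<Longrightarrow> lcoset g H \<in> quot H"
  unfolding quot_def by blast

lemma bounded_bilinear_gmul: "bounded_bilinear gmul"
proof -
  have "linear (\<lambda>x. gmul x b)" "linear (\<lambda>x. gmul b x)" for b :: "'k::finite grp"
    by (rule linearI, simp_all add: gmul_def vec_eq_iff matrix_matrix_mult_def sum.distrib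
          algebra_simps scaleR_sum_right)+
  then show ?thesis
    using bilinear_conv_bounded_bilinear unfolding bilinear_def by blast
qed

lemma bounded_linear_gmul_right: "bounded_linear (\<lambda>x. gmul x b)"
  by (rule bounded_bilinear.bounded_linear_left[OF bounded_bilinear_gmul])

lemma continuous_gmul_right: "continuous (at x) (\<lambda>x. gmul x b)"
  by (intro linear_continuous_at bounded_linear_gmul_right)

lemma continuous_on_gmul_right: "continuous_on A (\<lambda>x. gmul x b)"
  by (intro linear_continuous_on bounded_linear_gmul_right)

lemma openin_gmul_right_preimage:
  "\<rho> \<in> SLprod \<Longrightarrow> openin (top_of_set SLprod) U \<Longrightarrow> openin (top_of_set SLprod) (SLprod \<inter> (\<lambda>g. gmul g \<rho>) -` U)"
  by (rule continuous_openin_preimage[OF continuous_on_gmul_right]) (auto intro: gmul_in_SLprod)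

lemma closedin_gmul_right_preimage:
  "\<rho> \<in> SLprod \<Longrightarrow> closedin (top_of_set SLprod) C \<Longrightarrow> closedin (top_of_set SLprod) (SLprod \<inter> (\<lambda>g. gmul g \<rho>) -` C)"
  by (rule continuous_closedin_preimage_gen[OF continuous_on_gmul_right]) (auto intro: gmul_in_SLprod)

lemma bounded_linear_ginv: "bounded_linear ginv"
proof -
  have "linear ginv"
    by (rule linearI) (simp_all add: ginv_def adjugate2_def vec_eq_iff)
  then show ?thesis
    using linear_conv_bounded_linear by blast
qed

section \<open>The quotient topology on \<open>G/\<Gamma>\<close>\<close>

lemma istopology_qtop:
  "istopology (\<lambda>U. U \<subseteq> quot H \<and> openin (top_of_set SLprod) {g \<in> SLprod. lcoset g H \<in> U})"
proof -
  have "openin (top_of_set SLprod) {g \<in> SLprod. lcoset g H \<in> S \<inter> T}"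
    if "openin (top_of_set SLprod) {g \<in> SLprod. lcoset g H \<in> S}"
      "openin (top_of_set SLprod) {g \<in> SLprod. lcoset g H \<in> T}" for S T
  proof -
    have "{g \<in> SLprod. lcoset g H \<in> S \<inter> T} =
        {g \<in> SLprod. lcoset g H \<in> S} \<inter> {g \<in> SLprod. lcoset g H \<in> T}"
      by auto
    then show ?thesis
      using that openin_Int by auto
  qed
  moreover have "openin (top_of_set SLprod) {g \<in> SLprod. lcoset g H \<in> \<Union>\<K>}"
    if "\<forall>S\<in>\<K>. openin (top_of_set SLprod) {g \<in> SLprod. lcoset g H \<in> S}" for \<K>
  proof -
    have "{g \<in> SLprod. lcoset g H \<in> \<Union>\<K>} = (\<Union>S\<in>\<K>. {g \<in> SLprod. lcoset g H \<in> S})"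
      by auto
    then show ?thesis
      using that by (auto intro!: openin_Union)
  qed
  ultimately show ?thesis
    unfolding istopology_def by (simp add: le_infI1 Sup_le_iff)
qed

lemma openin_qtop:
  "openin (qtop H) U \<longleftrightarrow> U \<subseteq> quot H \<and> openin (top_of_set SLprod) {g \<in> SLprod. lcoset g H \<in> U}"
  unfolding qtop_def topology_inverse'[OF istopology_qtop] by (rule refl)

lemma topspace_qtop [simp]: "topspace (qtop H) = quot H"
proof -
  have "{g \<in> SLprod. lcoset g H \<in> quot H} = SLprod"
    using lcoset_in_quot by blast
  then have "openin (qtop H) (quot H)"
    unfolding openin_qtop by simp
  then have "quot H \<subseteq> topspace (qtop H)"
    by (rule openin_subset)
  moreover have "topspace (qtop H) \<subseteq> quot H"
    using openin_topspace[of "qtop H"] unfolding openin_qtop by blast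
  ultimately show ?thesis
    by blast
qed

lemma closedin_qtop:
  "closedin (qtop H) C \<longleftrightarrow> C \<subseteq> quot H \<and> closedin (top_of_set SLprod) {g \<in> SLprod. lcoset g H \<in> C}"
proof -
  have e: "{g \<in> SLprod. lcoset g H \<in> quot H - C} = SLprod - {g \<in> SLprod. lcoset g H \<in> C}"
    using lcoset_in_quot by auto
  show ?thesis
    unfolding closedin_def openin_qtop topspace_qtop e by (auto simp: closedin_def)
qed

lemma lcoset_preimage_lcoset_image:
  assumes "is_subgroup H"
  shows "{g \<in> SLprod. lcoset g H \<in> (\<lambda>u. lcoset u H) ` U} = (\<Union>\<gamma>\<in>H. SLprod \<inter> (\<lambda>g. gmul g \<gamma>) -` U)"
proof -
  have "lcoset g H \<in> (\<lambda>u. lcoset u H) ` U \<longleftrightarrow> (\<exists>\<gamma>\<in>H. gmul g \<gamma> \<in> U)" for g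
    unfolding image_iff lcoset_eq_iff[OF assms] by blast
  then show ?thesis
    by auto
qed

lemma openin_qtop_lcoset_image:
  assumes H: "is_subgroup H" and U: "openin (top_of_set SLprod) U"
  shows "openin (qtop H) ((\<lambda>u. lcoset u H) ` U)"
  unfolding openin_qtop lcoset_preimage_lcoset_image[OF H]
proof (intro conjI openin_Union ballI)
  show "(\<lambda>u. lcoset u H) ` U \<subseteq> quot H"
    using U openin_imp_subset lcoset_in_quot by blast
  fix S assume "S \<in> (\<lambda>\<gamma>. SLprod \<inter> (\<lambda>g. gmul g \<gamma>) -` U) ` H"
  then obtain \<gamma> where "\<gamma> \<in> H" "S = SLprod \<inter> (\<lambda>g. gmul g \<gamma>) -` U"
    by blast
  then show "openin (top_of_set SLprod) S"
    using openin_gmul_right_preimage[OF subgroup_SLprod[OF H] U] by blast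
qed

lemma discrete_subgroup_lcoset_inj_on:
  assumes \<Gamma>: "discrete_subgroup \<Gamma>" and g0: "g0 \<in> SLprod"
  obtains r where "r > 0" "inj_on (\<lambda>g. lcoset g \<Gamma>) (SLprod \<inter> ball g0 r)"
proof -
  note sg = discrete_subgroup_is_subgroup[OF \<Gamma>]
  obtain e where e: "e > 0" "\<And>\<gamma>. \<gamma> \<in> \<Gamma> \<Longrightarrow> dist \<gamma> gone < e \<Longrightarrow> \<gamma> = gone"
    using \<Gamma> subgroup_gone[OF sg] unfolding discrete_subgroup_def by blast
  have "isCont (\<lambda>p. gmul (ginv (fst p)) (snd p)) (g0, g0)"
    by (intro bounded_bilinear.isCont[OF bounded_bilinear_gmul] bounded_linear.isCont[OF bounded_linear_ginv]
        isCont_fst isCont_snd continuous_ident)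
  then obtain d where d: "d > 0"
    "\<And>p. dist p (g0, g0) < d \<Longrightarrow> dist (gmul (ginv (fst p)) (snd p)) (gmul (ginv g0) g0) < e"
    using e(1) unfolding continuous_at_eps_delta by auto
  show ?thesis
  proof (rule that[of "d/2"])
    show "d/2 > 0" using d by simp
    show "inj_on (\<lambda>g. lcoset g \<Gamma>) (SLprod \<inter> ball g0 (d/2))"
    proof (rule inj_onI)
      fix a b assume a: "a \<in> SLprod \<inter> ball g0 (d/2)" and b: "b \<in> SLprod \<inter> ball g0 (d/2)"
        and "lcoset a \<Gamma> = lcoset b \<Gamma>"
      then obtain \<gamma> where \<gamma>: "\<gamma> \<in> \<Gamma>" "b = gmul a \<gamma>"
        using lcoset_eq_iff[OF sg] by blast
      have "dist (a, b) (g0, g0) \<le> dist a g0 + dist b g0"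
        unfolding dist_Pair_Pair by (rule sqrt_sum_squares_le_sum) simp_all
      also have "\<dots> < d"
        using a b by (simp add: dist_commute)
      finally have "dist (gmul (ginv a) b) gone < e"
        using d(2)[of "(a, b)"] g0 by (simp add: ginv_cancel)
      moreover have "gmul (ginv a) b = \<gamma>"
        using a \<gamma> by (simp add: gmul_assoc ginv_cancel)
      ultimately have "\<gamma> = gone"
        using e(2) \<gamma> by simp
      then show "a = b"
        using \<gamma> by simp
    qed
  qed
qed

section \<open>Finite-index subgroups and bounded orbits\<close>

lemma compactin_closure_of_image_iff_proper_map:
  assumes f: "continuous_map X Y f" "proper_map X Y f" and S: "S \<subseteq> topspace X"
  shows "compactin Y (Y closure_of f ` S) \<longleftrightarrow> compactin X (X closure_of S)"
proof
  assume cY: "compactin Y (Y closure_of f ` S)"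
  define P where "P = {x \<in> topspace X. f x \<in> Y closure_of f ` S}"
  have "f ` S \<subseteq> topspace Y"
    using S continuous_map_image_subset_topspace[OF f(1)] by blast
  then have "S \<subseteq> P"
    unfolding P_def using S closure_of_subset by fastforce
  moreover have "closedin X P"
    unfolding P_def by (rule closedin_continuous_map_preimage[OF f(1) closedin_closure_of])
  ultimately have "X closure_of S \<subseteq> P"
    by (rule closure_of_minimal)
  moreover have "compactin X P"
    unfolding P_def using compactin_proper_map_preimage[OF f(2) cY] by simp
  ultimately show "compactin X (X closure_of S)"
    using closed_compactin closedin_closure_of by blast
next
  assume cX: "compactin X (X closure_of S)"
  have "compactin Y (f ` (X closure_of S))"
    by (rule image_compactin[OF cX f(1)])
  moreover have "Y closure_of f ` S \<subseteq> f ` (X closure_of S)"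
    using proper_imp_closed_map[OF f(2)] S unfolding closed_map_closure_of_image by blast
  ultimately show "compactin Y (Y closure_of f ` S)"
    using closed_compactin closedin_closure_of by blast
qed

definition quot_proj :: "'k::finite grp set \<Rightarrow> 'k grp set \<Rightarrow> 'k grp set" where
  "quot_proj \<Gamma> X = (\<Union>x\<in>X. lcoset x \<Gamma>)"

locale finite_index_subgroup =
  fixes \<Delta> \<Gamma> :: "'k::finite grp set"
  assumes subgroups: "is_subgroup \<Delta>" "is_subgroup \<Gamma>" and sub: "\<Delta> \<subseteq> \<Gamma>"
    and finite_index: "finite_index \<Delta> \<Gamma>"
begin

lemma quot_proj_lcoset [simp]: "quot_proj \<Gamma> (lcoset g \<Delta>) = lcoset g \<Gamma>"
proof -
  have "quot_proj \<Gamma> (lcoset g \<Delta>) = (\<Union>\<delta>\<in>\<Delta>. lcoset (gmul g \<delta>) \<Gamma>)"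
    unfolding quot_proj_def lcoset_def by auto
  also have "\<dots> = lcoset g \<Gamma>"
    using lcoset_gmul[OF subgroups(2)] sub subgroup_gone[OF subgroups(1)] by auto
  finally show ?thesis .
qed

lemma quot_proj_in_quot: "X \<in> quot \<Delta> \<Longrightarrow> quot_proj \<Gamma> X \<in> quot \<Gamma>"
  unfolding quot_def by auto

lemma continuous_map_quot_proj: "continuous_map (qtop \<Delta>) (qtop \<Gamma>) (quot_proj \<Gamma>)"
  unfolding continuous_map
proof (intro conjI allI impI)
  show "quot_proj \<Gamma> ` topspace (qtop \<Delta>) \<subseteq> topspace (qtop \<Gamma>)"
    using quot_proj_in_quot by auto
  fix U assume "openin (qtop \<Gamma>) U"
  moreover have "{g \<in> SLprod. lcoset g \<Delta> \<in> {x \<in> topspace (qtop \<Delta>). quot_proj \<Gamma> x \<in> U}}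
      = {g \<in> SLprod. lcoset g \<Gamma> \<in> U}"
    using lcoset_in_quot by auto
  ultimately show "openin (qtop \<Delta>) {x \<in> topspace (qtop \<Delta>). quot_proj \<Gamma> x \<in> U}"
    unfolding openin_qtop by auto
qed

text \<open>\<open>R\<close> is a set of representatives of \<open>\<Gamma>/\<Delta>\<close>; this makes the fibres of \<open>quot_proj\<close> finite.\<close>
lemma fibre_quot_proj:
  obtains R where "finite R" "R \<subseteq> \<Gamma>"
    "\<And>g x. lcoset x \<Gamma> = lcoset g \<Gamma> \<Longrightarrow> \<exists>\<rho>\<in>R. lcoset x \<Delta> = lcoset (gmul g \<rho>) \<Delta>"
proof -
  have "finite ((\<lambda>g. lcoset g \<Delta>) ` \<Gamma>)"
    using finite_index unfolding finite_index_def by (simp add: Setcompr_eq_image)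
  then obtain R where R: "R \<subseteq> \<Gamma>" "finite R" "(\<lambda>g. lcoset g \<Delta>) ` \<Gamma> = (\<lambda>g. lcoset g \<Delta>) ` R"
    using finite_subset_image[of "(\<lambda>g. lcoset g \<Delta>) ` \<Gamma>" "\<lambda>g. lcoset g \<Delta>" \<Gamma>] by blast
  show ?thesis
  proof (rule that[OF R(2,1)])
    fix g x assume "lcoset x \<Gamma> = lcoset g \<Gamma>"
    then obtain \<gamma> where \<gamma>: "\<gamma> \<in> \<Gamma>" "x = gmul g \<gamma>"
      using lcoset_eq_iff[OF subgroups(2)] by metis
    then obtain \<rho> where \<rho>: "\<rho> \<in> R" "lcoset \<gamma> \<Delta> = lcoset \<rho> \<Delta>"
      using R(3) by blast
    then obtain \<delta> where "\<delta> \<in> \<Delta>" "\<gamma> = gmul \<rho> \<delta>"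
      using lcoset_eq_iff[OF subgroups(1)] by metis
    then have "lcoset x \<Delta> = lcoset (gmul g \<rho>) \<Delta>"
      using \<gamma> by (simp add: gmul_assoc lcoset_gmul[OF subgroups(1)])
    then show "\<exists>\<rho>\<in>R. lcoset x \<Delta> = lcoset (gmul g \<rho>) \<Delta>"
      using \<rho> by blast
  qed
qed

lemma lcoset_preimage_quot_proj_image:
  assumes C: "C \<subseteq> quot \<Delta>" and R: "R \<subseteq> \<Gamma>"
    "\<And>g x. lcoset x \<Gamma> = lcoset g \<Gamma> \<Longrightarrow> \<exists>\<rho>\<in>R. lcoset x \<Delta> = lcoset (gmul g \<rho>) \<Delta>"
  shows "{g \<in> SLprod. lcoset g \<Gamma> \<in> quot_proj \<Gamma> ` C} =
    (\<Union>\<rho>\<in>R. SLprod \<inter> (\<lambda>g. gmul g \<rho>) -` {g \<in> SLprod. lcoset g \<Delta> \<in> C})"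
proof (intro equalityI subsetI)
  fix g assume g: "g \<in> {g \<in> SLprod. lcoset g \<Gamma> \<in> quot_proj \<Gamma> ` C}"
  then obtain x where x: "lcoset x \<Delta> \<in> C" "lcoset g \<Gamma> = lcoset x \<Gamma>"
    using C unfolding quot_def by auto
  then obtain \<rho> where \<rho>: "\<rho> \<in> R" "lcoset x \<Delta> = lcoset (gmul g \<rho>) \<Delta>"
    using R(2) by metis
  moreover have "gmul g \<rho> \<in> SLprod"
    using g \<rho>(1) R(1) subgroup_SLprod[OF subgroups(2)] gmul_in_SLprod by blast
  ultimately show "g \<in> (\<Union>\<rho>\<in>R. SLprod \<inter> (\<lambda>g. gmul g \<rho>) -` {g \<in> SLprod. lcoset g \<Delta> \<in> C})"
    using g x by auto
next
  fix g assume "g \<in> (\<Union>\<rho>\<in>R. SLprod \<inter> (\<lambda>g. gmul g \<rho>) -` {g \<in> SLprod. lcoset g \<Delta> \<in> C})"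
  then obtain \<rho> where \<rho>: "\<rho> \<in> R" "g \<in> SLprod" "lcoset (gmul g \<rho>) \<Delta> \<in> C"
    by blast
  then have "quot_proj \<Gamma> (lcoset (gmul g \<rho>) \<Delta>) = lcoset g \<Gamma>"
    using lcoset_gmul[OF subgroups(2)] R(1) by auto
  then show "g \<in> {g \<in> SLprod. lcoset g \<Gamma> \<in> quot_proj \<Gamma> ` C}"
    using \<rho> by force
qed

lemma closed_map_quot_proj: "closed_map (qtop \<Delta>) (qtop \<Gamma>) (quot_proj \<Gamma>)"
  unfolding closed_map_def
proof (intro allI impI)
  fix C assume "closedin (qtop \<Delta>) C"
  then have C: "C \<subseteq> quot \<Delta>" "closedin (top_of_set SLprod) {g \<in> SLprod. lcoset g \<Delta> \<in> C}"
    unfolding closedin_qtop by auto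
  obtain R where R: "finite R" "R \<subseteq> \<Gamma>"
    "\<And>g x. lcoset x \<Gamma> = lcoset g \<Gamma> \<Longrightarrow> \<exists>\<rho>\<in>R. lcoset x \<Delta> = lcoset (gmul g \<rho>) \<Delta>"
    using fibre_quot_proj by metis
  have "closedin (top_of_set SLprod)
      (\<Union>\<rho>\<in>R. SLprod \<inter> (\<lambda>g. gmul g \<rho>) -` {g \<in> SLprod. lcoset g \<Delta> \<in> C})"
  proof (intro closedin_Union ballI)
    fix S assume "S \<in> (\<lambda>\<rho>. SLprod \<inter> (\<lambda>g. gmul g \<rho>) -` {g \<in> SLprod. lcoset g \<Delta> \<in> C}) ` R"
    then obtain \<rho> where "\<rho> \<in> R" "S = SLprod \<inter> (\<lambda>g. gmul g \<rho>) -` {g \<in> SLprod. lcoset g \<Delta> \<in> C}"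
      by blast
    then show "closedin (top_of_set SLprod) S"
      using closedin_gmul_right_preimage[OF _ C(2)] R(2) subgroup_SLprod[OF subgroups(2)] by blast
  qed (use R(1) in simp)
  moreover have "quot_proj \<Gamma> ` C \<subseteq> quot \<Gamma>"
    using C(1) quot_proj_in_quot by blast
  ultimately show "closedin (qtop \<Gamma>) (quot_proj \<Gamma> ` C)"
    unfolding closedin_qtop by (simp add: lcoset_preimage_quot_proj_image[OF C(1) R(2,3)])
qed

lemma proper_map_quot_proj: "proper_map (qtop \<Delta>) (qtop \<Gamma>) (quot_proj \<Gamma>)"
  unfolding proper_map_def
proof (intro conjI ballI closed_map_quot_proj)
  fix Y assume "Y \<in> topspace (qtop \<Gamma>)"
  then obtain g where g: "g \<in> SLprod" "Y = lcoset g \<Gamma>"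
    unfolding topspace_qtop quot_def by blast
  obtain R where R: "finite R" "R \<subseteq> \<Gamma>"
    "\<And>g x. lcoset x \<Gamma> = lcoset g \<Gamma> \<Longrightarrow> \<exists>\<rho>\<in>R. lcoset x \<Delta> = lcoset (gmul g \<rho>) \<Delta>"
    using fibre_quot_proj by metis
  have "{x \<in> topspace (qtop \<Delta>). quot_proj \<Gamma> x = Y} \<subseteq> (\<lambda>\<rho>. lcoset (gmul g \<rho>) \<Delta>) ` R"
  proof
    fix x assume "x \<in> {x \<in> topspace (qtop \<Delta>). quot_proj \<Gamma> x = Y}"
    then have "x \<in> quot \<Delta>" "quot_proj \<Gamma> x = Y"
      by auto
    then obtain y where y: "x = lcoset y \<Delta>" "quot_proj \<Gamma> x = Y"
      unfolding quot_def by blast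
    then have "lcoset y \<Gamma> = lcoset g \<Gamma>"
      using g by simp
    then obtain \<rho> where "\<rho> \<in> R" "x = lcoset (gmul g \<rho>) \<Delta>"
      using R(3) y by metis
    then show "x \<in> (\<lambda>\<rho>. lcoset (gmul g \<rho>) \<Delta>) ` R"
      by blast
  qed
  then have "finite {x \<in> topspace (qtop \<Delta>). quot_proj \<Gamma> x = Y}"
    using R(1) finite_subset by blast
  then show "compactin (qtop \<Delta>) {x \<in> topspace (qtop \<Delta>). quot_proj \<Gamma> x = Y}"
    by (intro finite_imp_compactin) auto
qed

lemma lcoset_in_Ebdd_iff:
  assumes F: "F \<subseteq> SLprod" and g: "g \<in> SLprod"
  shows "lcoset g \<Delta> \<in> Ebdd F \<Delta> \<longleftrightarrow> lcoset g \<Gamma> \<in> Ebdd F \<Gamma>"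
proof -
  have orbit: "(\<lambda>f. act f (lcoset g \<Delta>)) ` F \<subseteq> topspace (qtop \<Delta>)"
    using F g by (auto simp: act_lcoset intro!: lcoset_in_quot gmul_in_SLprod)
  have "quot_proj \<Gamma> ` (\<lambda>f. act f (lcoset g \<Delta>)) ` F = (\<lambda>f. act f (lcoset g \<Gamma>)) ` F"
    by (auto simp: act_lcoset image_image)
  then show ?thesis
    unfolding Ebdd_def using g lcoset_in_quot
      compactin_closure_of_image_iff_proper_map[OF continuous_map_quot_proj proper_map_quot_proj orbit]
    by auto
qed

end

section \<open>Hyperplane absolute winning is a local property\<close>

definition winning_strategy ::
    "'k::finite cvec set \<Rightarrow> 'k cvec set \<Rightarrow> real \<Rightarrow> (('k cvec \<times> real) list \<Rightarrow> 'k cvec \<times> complex \<times> real) \<Rightarrow> bool"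
  where "winning_strategy \<Omega> E \<beta> \<sigma> \<longleftrightarrow> legal_strategy \<beta> \<sigma> \<and>
     (\<forall>b. consistent_play \<Omega> \<beta> \<sigma> b \<longrightarrow> E \<inter> (\<Inter>j. cball (fst (b j)) (snd (b j))) \<noteq> {})"

lemma HAW_on_iff_winning_strategy:
  "HAW_on \<Omega> E \<longleftrightarrow> (\<forall>\<beta>. 0 < \<beta> \<and> \<beta> < 1/3 \<longrightarrow> (\<exists>\<sigma>. winning_strategy \<Omega> E \<beta> \<sigma>))"
  unfolding HAW_on_def winning_strategy_def ..

lemma winning_strategy_mono: "winning_strategy \<Omega> E \<beta> \<sigma> \<Longrightarrow> E \<subseteq> E' \<Longrightarrow> winning_strategy \<Omega> E' \<beta> \<sigma>"
  unfolding winning_strategy_def by blast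

lemma consistent_play_step:
  assumes "consistent_play \<Omega> \<beta> \<sigma> b"
  shows "cball (fst (b (Suc j))) (snd (b (Suc j))) \<subseteq> cball (fst (b j)) (snd (b j))"
    and "\<beta> * snd (b j) \<le> snd (b (Suc j))"
    and "case \<sigma> (map b [0..<Suc j]) of (a, c, \<delta>) \<Rightarrow>
           cball (fst (b (Suc j))) (snd (b (Suc j))) \<inter> hnbhd a c \<delta> = {}"
  using assms unfolding consistent_play_def by (simp_all del: upt_Suc)

lemma consistent_play_radius_pos:
  assumes "consistent_play \<Omega> \<beta> \<sigma> b" "0 < \<beta>"
  shows "0 < snd (b j)"
proof (induction j)
  case 0
  then show ?case
    using assms(1) unfolding consistent_play_def by simp
next
  case (Suc j)
  then have "0 < \<beta> * snd (b j)"
    using assms(2) by simp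
  also have "\<dots> \<le> snd (b (Suc j))"
    by (rule consistent_play_step(2)[OF assms(1)])
  finally show ?case .
qed

lemma consistent_play_decseq:
  "consistent_play \<Omega> \<beta> \<sigma> b \<Longrightarrow> decseq (\<lambda>j. cball (fst (b j)) (snd (b j)))"
  unfolding decseq_Suc_iff by (intro allI consistent_play_step(1))

lemma consistent_play_shift:
  assumes play: "consistent_play \<Omega> \<beta> \<sigma> b" and \<beta>: "0 < \<beta>"
    and fit: "cball (fst (b i)) (snd (b i)) \<subseteq> \<Omega>'"
    and \<sigma>': "\<And>k. \<sigma>' (map (\<lambda>k. b (i + k)) [0..<Suc k]) = \<sigma> (map b [0..<Suc (i + k)])"
  shows "consistent_play \<Omega>' \<beta> \<sigma>' (\<lambda>k. b (i + k))"
  using play consistent_play_radius_pos[OF play \<beta>, of i] fit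
  unfolding consistent_play_def \<sigma>' by (simp del: upt_Suc)

lemma radius_le_half_if_center_avoided:
  fixes c c' :: "'a::euclidean_space"
  assumes "cball c' r' \<subseteq> cball c r" "c \<notin> cball c' r'" "0 < r'"
  shows "r' \<le> r / 2"
  using assms cball_subset_cball_iff[of c' r' c r] by (auto simp: dist_commute)

lemma center_in_hnbhd: "0 < \<delta> \<Longrightarrow> c \<in> hnbhd a (cdot a c) \<delta>"
  unfolding hnbhd_def by simp

lemma halving_tendsto_zero:
  fixes r :: "nat \<Rightarrow> real"
  assumes pos: "\<And>j. 0 \<le> r j" and half: "\<And>j. r (Suc j) \<le> r j / 2"
  shows "r \<longlonglongrightarrow> 0"
proof (rule real_tendsto_sandwich[of "\<lambda>_. 0" r _ "\<lambda>j. r 0 * (1/2) ^ j"])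
  have "r j \<le> r 0 * (1/2) ^ j" for j
    using half by (induction j) (auto intro: order_trans)
  then show "eventually (\<lambda>j. r j \<le> r 0 * (1/2) ^ j) sequentially"
    by simp
  show "(\<lambda>j. r 0 * (1/2) ^ j) \<longlonglongrightarrow> 0"
    by (intro tendsto_mult_right_zero LIMSEQ_realpow_zero) simp_all
qed (use pos in simp_all)

lemma nested_cballs_shrink_to_point:
  fixes c :: "nat \<Rightarrow> 'a::complete_space"
  assumes nested: "\<And>j. cball (c (Suc j)) (r (Suc j)) \<subseteq> cball (c j) (r j)"
    and pos: "\<And>j. 0 < r j" and half: "\<And>j. r (Suc j) \<le> r j / 2"
  shows "\<exists>p. (\<forall>j. p \<in> cball (c j) (r j)) \<and> (\<forall>e>0. \<exists>j. cball (c j) (r j) \<subseteq> ball p e)"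
proof -
  have lim: "r \<longlonglongrightarrow> 0"
    using halving_tendsto_zero[of r] pos half less_imp_le by blast
  have small: "\<exists>j. 2 * r j < e" if "0 < e" for e
  proof -
    have "eventually (\<lambda>j. r j < e / 2) sequentially"
      using order_tendstoD(2)[OF lim, of "e / 2"] that by simp
    then obtain j where "r j < e / 2"
      unfolding eventually_sequentially by blast
    then show ?thesis
      by (intro exI[of _ j]) simp
  qed
  have dec: "decseq (\<lambda>j. cball (c j) (r j))"
    using nested by (simp add: decseq_Suc_iff)
  obtain p where p: "\<And>j. p \<in> cball (c j) (r j)"
  proof (rule decreasing_closed_nest[of "\<lambda>j. cball (c j) (r j)"])
    show "cball (c j) (r j) \<noteq> {}" for j
      using pos[of j] by auto
    fix e :: real assume "0 < e"
    then obtain j where "2 * r j < e"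
      using small by blast
    then have "\<forall>x\<in>cball (c j) (r j). \<forall>y\<in>cball (c j) (r j). dist x y < e"
      by (smt (verit) dist_commute dist_triangle mem_cball)
    then show "\<exists>j. \<forall>x\<in>cball (c j) (r j). \<forall>y\<in>cball (c j) (r j). dist x y < e"
      by blast
  qed (use dec in \<open>auto simp: decseq_def\<close>)
  moreover have "\<exists>j. cball (c j) (r j) \<subseteq> ball p e" if "0 < e" for e
  proof -
    obtain j where "2 * r j < e"
      using small \<open>0 < e\<close> by blast
    then have "cball (c j) (r j) \<subseteq> ball p e"
      using p[of j] by (smt (verit) dist_commute dist_triangle mem_ball mem_cball subsetI)
    then show ?thesis
      by blast
  qed
  ultimately show ?thesis
    by blast
qed

lemma INT_decseq_shift: "decseq F \<Longrightarrow> (\<Inter>k. F (n + k)) = (\<Inter>k. F k)"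
proof (intro equalityI subsetI)
  fix x assume "decseq F" "x \<in> (\<Inter>k. F (n + k))"
  then have "x \<in> F k" for k
    unfolding decseq_def using le_add2[of k n] by blast
  then show "x \<in> (\<Inter>k. F k)"
    by blast
qed auto

locale strategy_gluing =
  fixes \<beta> :: real and V S :: "'k::finite cvec set"
    and W :: "'k cvec \<Rightarrow> 'k cvec set"
    and \<sigma> :: "'k cvec \<Rightarrow> ('k cvec \<times> real) list \<Rightarrow> 'k cvec \<times> complex \<times> real"
  assumes \<beta>_pos: "0 < \<beta>"
    and W_open: "\<And>z. z \<in> V \<Longrightarrow> open (W z)" and W_centre: "\<And>z. z \<in> V \<Longrightarrow> z \<in> W z"
    and \<sigma>_wins: "\<And>z. z \<in> V \<Longrightarrow> winning_strategy (W z) S \<beta> (\<sigma> z)"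
begin

definition fits :: "'k cvec \<times> real \<Rightarrow> bool" where
  "fits B \<longleftrightarrow> (\<exists>z\<in>V. cball (fst B) (snd B) \<subseteq> W z)"

definition home :: "'k cvec \<times> real \<Rightarrow> 'k cvec" where
  "home B = (SOME z. z \<in> V \<and> cball (fst B) (snd B) \<subseteq> W z)"

text \<open>As long as none of B's balls fits into a patch \<open>W z\<close>, A removes a neighbourhood of a
  hyperplane through the centre of B's current ball, which forces B to halve the radius; once a
  ball fits, A plays the winning strategy of that patch on the rest of the game.\<close>
definition glued :: "('k cvec \<times> real) list \<Rightarrow> 'k cvec \<times> complex \<times> real" where
  "glued hist = (case dropWhile (Not \<circ> fits) hist of
      [] \<Rightarrow> (1, cdot 1 (fst (last hist)), \<beta> * snd (last hist))
    | B # _ \<Rightarrow> \<sigma> (home B) (dropWhile (Not \<circ> fits) hist))"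

lemma home_fits: "fits B \<Longrightarrow> home B \<in> V \<and> cball (fst B) (snd B) \<subseteq> W (home B)"
  unfolding fits_def home_def by (rule someI_ex) blast

lemma legal_glued: "legal_strategy \<beta> glued"
  unfolding legal_strategy_def
proof (intro allI impI)
  fix hist :: "('k cvec \<times> real) list" assume hist: "hist \<noteq> []" "0 < snd (last hist)"
  show "case glued hist of (a, c, \<delta>) \<Rightarrow> a \<noteq> 0 \<and> 0 < \<delta> \<and> \<delta> \<le> \<beta> * snd (last hist)"
  proof (cases "dropWhile (Not \<circ> fits) hist")
    case Nil
    show ?thesis
      unfolding glued_def Nil using hist \<beta>_pos by simp
  next
    case (Cons B rest)
    then have B: "B \<in> set hist" "fits B"
      by (metis list.set_intros(1) set_dropWhileD, simp add: dropWhile_eq_Cons_conv)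
    then have last_eq: "last (B # rest) = last hist"
      using Cons dropWhile_last[of B hist "Not \<circ> fits"] by simp
    have "legal_strategy \<beta> (\<sigma> (home B))"
      using \<sigma>_wins home_fits[OF B(2)] unfolding winning_strategy_def by blast
    note legal = this[unfolded legal_strategy_def, rule_format]
    have "case \<sigma> (home B) (B # rest) of (a, c, \<delta>) \<Rightarrow> a \<noteq> 0 \<and> 0 < \<delta> \<and> \<delta> \<le> \<beta> * snd (last hist)"
      by (rule legal[of "B # rest", unfolded last_eq]) (simp_all add: hist(2))
    then show ?thesis
      unfolding glued_def Cons list.case .
  qed
qed

lemma glued_before_fit:
  assumes "\<And>i. i \<le> j \<Longrightarrow> \<not> fits (b i)"
  shows "glued (map b [0..<Suc j]) = (1, cdot 1 (fst (b j)), \<beta> * snd (b j))"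
proof -
  have "dropWhile (Not \<circ> fits) (map b [0..<Suc j]) = []"
    using assms by (simp del: upt_Suc)
  moreover have "last (map b [0..<Suc j]) = b j"
    by simp
  ultimately show ?thesis
    unfolding glued_def by (simp only: list.case)
qed

lemma glued_after_fit:
  assumes "fits (b i)" "\<And>j. j < i \<Longrightarrow> \<not> fits (b j)"
  shows "glued (map b [0..<Suc (i + k)]) = \<sigma> (home (b i)) (map (\<lambda>k. b (i + k)) [0..<Suc k])"
proof -
  have "[0..<Suc (i + k)] = [0..<i] @ [i..<Suc (i + k)]"
    using upt_add_eq_append[of 0 i "Suc k"] by simp
  then have "dropWhile (Not \<circ> fits) (map b [0..<Suc (i + k)]) =
      dropWhile (Not \<circ> fits) (map b [0..<i] @ map b [i..<Suc (i + k)])"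
    by simp
  also have "\<dots> = dropWhile (Not \<circ> fits) (map b [i..<Suc (i + k)])"
    by (rule dropWhile_append2) (use assms(2) in auto)
  also have "\<dots> = map b [i..<Suc (i + k)]"
    using assms(1) by (simp add: upt_conv_Cons del: upt_Suc)
  also have "\<dots> = map (\<lambda>k. b (i + k)) [0..<Suc k]"
    by (rule nth_equalityI) (simp_all del: upt_Suc)
  finally have drop: "dropWhile (Not \<circ> fits) (map b [0..<Suc (i + k)]) = map (\<lambda>k. b (i + k)) [0..<Suc k]" .
  show ?thesis
    unfolding glued_def drop unfolding map_upt_Suc list.case add_0_right ..
qed

lemma glued_wins_after_fit:
  assumes play: "consistent_play V \<beta> glued b" and fit: "fits (b i)"
  shows "S \<inter> (\<Inter>j. cball (fst (b j)) (snd (b j))) \<noteq> {}"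
proof -
  define i0 where "i0 = (LEAST i. fits (b i))"
  have i0: "fits (b i0)" "\<And>j. j < i0 \<Longrightarrow> \<not> fits (b j)"
    using fit unfolding i0_def by (auto intro: LeastI dest: not_less_Least)
  define z where "z = home (b i0)"
  have z: "z \<in> V" "cball (fst (b i0)) (snd (b i0)) \<subseteq> W z"
    using home_fits[OF i0(1)] unfolding z_def by auto
  have "consistent_play (W z) \<beta> (\<sigma> z) (\<lambda>k. b (i0 + k))"
    by (rule consistent_play_shift[OF play \<beta>_pos z(2)]) (simp only: glued_after_fit[of b i0, OF i0] z_def)
  then have "S \<inter> (\<Inter>k. cball (fst (b (i0 + k))) (snd (b (i0 + k)))) \<noteq> {}"
    using \<sigma>_wins[OF z(1)] unfolding winning_strategy_def by blast
  then show ?thesis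
    using INT_decseq_shift[OF consistent_play_decseq[OF play], of i0] by simp
qed

lemma glued_play_fits:
  assumes play: "consistent_play V \<beta> glued b"
  shows "\<exists>i. fits (b i)"
proof (rule ccontr)
  assume none: "\<nexists>i. fits (b i)"
  let ?B = "\<lambda>j. cball (fst (b j)) (snd (b j))"
  have pos: "0 < snd (b j)" for j
    using consistent_play_radius_pos[OF play \<beta>_pos] .
  have nested: "?B (Suc j) \<subseteq> ?B j" for j
    by (rule consistent_play_step(1)[OF play])
  have "fst (b j) \<notin> ?B (Suc j)" for j
  proof -
    have "case glued (map b [0..<Suc j]) of (a, c, \<delta>) \<Rightarrow> ?B (Suc j) \<inter> hnbhd a c \<delta> = {}"
      by (rule consistent_play_step(3)[OF play])
    then have "?B (Suc j) \<inter> hnbhd 1 (cdot 1 (fst (b j))) (\<beta> * snd (b j)) = {}"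
      using glued_before_fit[of j b] none by simp
    then show ?thesis
      using center_in_hnbhd[of "\<beta> * snd (b j)" "fst (b j)" 1] pos \<beta>_pos by auto
  qed
  then have half: "snd (b (Suc j)) \<le> snd (b j) / 2" for j
    using radius_le_half_if_center_avoided nested pos by blast
  obtain p where p: "\<And>j. p \<in> ?B j" "\<And>e. 0 < e \<Longrightarrow> \<exists>j. ?B j \<subseteq> ball p e"
    using nested_cballs_shrink_to_point[of "\<lambda>j. fst (b j)" "\<lambda>j. snd (b j)", OF nested pos half] by blast
  have "p \<in> V"
    using p(1)[of 0] play unfolding consistent_play_def by blast
  then obtain e where "0 < e" "ball p e \<subseteq> W p"
    using W_open W_centre open_contains_ball by blast
  then obtain j where "?B j \<subseteq> W p"
    using p(2) by blast
  then have "fits (b j)"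
    using \<open>p \<in> V\<close> unfolding fits_def by auto
  then show False
    using none by blast
qed

lemma winning_glued: "winning_strategy V S \<beta> glued"
  unfolding winning_strategy_def using legal_glued glued_play_fits glued_wins_after_fit by blast

end

lemma HAW_on_local:
  assumes local: "\<And>z. z \<in> V \<Longrightarrow> \<exists>W T. open W \<and> z \<in> W \<and> T \<subseteq> S \<and> HAW_on W T"
  shows "HAW_on V S"
  unfolding HAW_on_iff_winning_strategy
proof (intro allI impI)
  fix \<beta> :: real assume \<beta>: "0 < \<beta> \<and> \<beta> < 1/3"
  obtain W T where WT: "\<And>z. z \<in> V \<Longrightarrow> open (W z) \<and> z \<in> W z \<and> T z \<subseteq> S \<and> HAW_on (W z) (T z)"
    using local by metis
  have "\<exists>\<sigma>. winning_strategy (W z) S \<beta> \<sigma>" if "z \<in> V" for z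
    using WT[OF that] \<beta> winning_strategy_mono unfolding HAW_on_iff_winning_strategy by blast
  then obtain \<sigma> where "\<And>z. z \<in> V \<Longrightarrow> winning_strategy (W z) S \<beta> (\<sigma> z)"
    by metis
  then interpret strategy_gluing \<beta> V S W \<sigma>
    using \<beta> WT by unfold_locales auto
  show "\<exists>\<sigma>. winning_strategy V S \<beta> \<sigma>"
    using winning_glued by blast
qed

section \<open>Holomorphic charts\<close>

lemma gmul_csg: "gmul (csg c v) b = csg c (gmul v b)"
  by (simp add: gmul_def csg_def vec_eq_iff matrix_matrix_mult_def sum_distrib_left mult.assoc)

lemma holo_vg_continuous_on: "holo_vg W h \<Longrightarrow> continuous_on W h"
  unfolding holo_vg_def by (meson continuous_at_imp_continuous_on has_derivative_continuous)

lemma holo_vg_subset: "holo_vg W h \<Longrightarrow> W' \<subseteq> W \<Longrightarrow> holo_vg W' h"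
  unfolding holo_vg_def by blast

lemma holo_gv_isCont: "holo_gv Ob H \<Longrightarrow> u \<in> Ob \<Longrightarrow> isCont H u"
  unfolding holo_gv_def using has_derivative_continuous by blast

lemma holo_gv_gmul_right:
  assumes H: "holo_gv Ob H" and Ob': "\<And>x. x \<in> Ob' \<Longrightarrow> gmul x \<rho> \<in> Ob"
  shows "holo_gv Ob' (\<lambda>x. H (gmul x \<rho>))"
  unfolding holo_gv_def
proof
  fix z assume "z \<in> Ob'"
  then obtain H' where H': "(H has_derivative H') (at (gmul z \<rho>))" "\<And>c v. H' (csg c v) = csv c (H' v)"
    using H Ob' unfolding holo_gv_def by blast
  have "((\<lambda>x. gmul x \<rho>) has_derivative (\<lambda>x. gmul x \<rho>)) (at z)"
    by (rule bounded_linear_imp_has_derivative[OF bounded_linear_gmul_right])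
  from diff_chain_at[OF this H'(1)]
  have "((\<lambda>x. H (gmul x \<rho>)) has_derivative (\<lambda>x. H' (gmul x \<rho>))) (at z)"
    by (simp add: o_def)
  moreover have "H' (gmul (csg c v) \<rho>) = csv c (H' (gmul v \<rho>))" for c v
    by (simp add: gmul_csg H'(2))
  ultimately show "\<exists>H'. ((\<lambda>x. H (gmul x \<rho>)) has_derivative H') (at z) \<and> (\<forall>c v. H' (csg c v) = csv c (H' v))"
    by blast
qed

lemma is_chart_inj_on: "is_chart \<Gamma> V \<psi> \<Longrightarrow> inj_on \<psi> V"
  unfolding is_chart_def by blast

lemma is_chart_openin: "is_chart \<Gamma> V \<psi> \<Longrightarrow> openin (qtop \<Gamma>) (\<psi> ` V)"
  unfolding is_chart_def by blast

lemma chart_lift_inverse: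
  assumes chart: "is_chart \<Gamma> V \<psi>" and W: "W \<subseteq> V"
    and h: "h ` W \<subseteq> SLprod" "\<And>w. w \<in> W \<Longrightarrow> \<psi> w = lcoset (h w) \<Gamma>" and w0: "w0 \<in> W"
  obtains Ob H where "open Ob" "h w0 \<in> Ob" "holo_gv Ob H"
    "\<And>g. g \<in> Ob \<inter> SLprod \<Longrightarrow> lcoset g \<Gamma> \<in> \<psi> ` V \<Longrightarrow> H g \<in> V \<and> \<psi> (H g) = lcoset g \<Gamma>"
    "\<And>w. w \<in> W \<Longrightarrow> h w \<in> Ob \<Longrightarrow> H (h w) = w"
proof -
  have in_image: "lcoset (h w) \<Gamma> \<in> \<psi> ` V" if "w \<in> W" for w
    using that W h(2) by (metis image_eqI subsetD)
  have "h w0 \<in> SLprod"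
    using h(1) w0 by blast
  then obtain Ob H where Ob: "open Ob" "h w0 \<in> Ob" "holo_gv Ob H"
    "\<And>g. g \<in> Ob \<inter> SLprod \<Longrightarrow> lcoset g \<Gamma> \<in> \<psi> ` V \<Longrightarrow> H g \<in> V \<and> \<psi> (H g) = lcoset g \<Gamma>"
    using chart in_image[OF w0] unfolding is_chart_def by metis
  have left_inverse: "H (h w) = w" if "w \<in> W" "h w \<in> Ob" for w
  proof -
    have "H (h w) \<in> V" "\<psi> (H (h w)) = \<psi> w"
      using Ob(4)[of "h w"] in_image h that by auto
    then show ?thesis
      using is_chart_inj_on[OF chart] that W by (meson inj_onD subsetD)
  qed
  show ?thesis
    using that[OF Ob left_inverse] .
qed

lemma chart_image_preimage_nhds:
  assumes chart: "is_chart \<Gamma> V \<psi>" and g0: "g0 \<in> SLprod" "lcoset g0 \<Gamma> \<in> \<psi> ` V"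
  shows "eventually (\<lambda>g. g \<in> SLprod \<longrightarrow> lcoset g \<Gamma> \<in> \<psi> ` V) (nhds g0)"
proof -
  have "openin (top_of_set SLprod) {g \<in> SLprod. lcoset g \<Gamma> \<in> \<psi> ` V}"
    using is_chart_openin[OF chart] unfolding openin_qtop by blast
  then obtain N where "open N" "{g \<in> SLprod. lcoset g \<Gamma> \<in> \<psi> ` V} = SLprod \<inter> N"
    unfolding openin_open by blast
  then show ?thesis
    using g0 unfolding eventually_nhds by blast
qed

text \<open>Near \<open>h w0\<close>, every \<open>g\<close> is \<open>\<Gamma>\<close>-equivalent to \<open>h (H g)\<close> with \<open>H\<close> the inverse chart;
  both are close to \<open>h w0\<close>, so discreteness of \<open>\<Gamma>\<close> forces \<open>g = h (H g)\<close>.\<close>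
lemma chart_lift_fills_nhds:
  assumes \<Gamma>: "discrete_subgroup \<Gamma>" and chart: "is_chart \<Gamma> V \<psi>"
    and W: "open W" "W \<subseteq> V" and h: "continuous_on W h" "h ` W \<subseteq> SLprod"
    "\<And>w. w \<in> W \<Longrightarrow> \<psi> w = lcoset (h w) \<Gamma>" and w0: "w0 \<in> W"
  shows "eventually (\<lambda>g. g \<in> SLprod \<longrightarrow> g \<in> h ` W) (nhds (h w0))"
proof -
  obtain Ob H where Ob: "open Ob" "h w0 \<in> Ob" "holo_gv Ob H"
    "\<And>g. g \<in> Ob \<inter> SLprod \<Longrightarrow> lcoset g \<Gamma> \<in> \<psi> ` V \<Longrightarrow> H g \<in> V \<and> \<psi> (H g) = lcoset g \<Gamma>"
    "\<And>w. w \<in> W \<Longrightarrow> h w \<in> Ob \<Longrightarrow> H (h w) = w"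
    using chart_lift_inverse[OF chart W(2) h(2,3) w0] by metis
  define u where "u = h w0"
  have u: "u \<in> SLprod" "u \<in> Ob" and Hu: "H u = w0"
    using w0 h(2) Ob(2,5) unfolding u_def by auto
  have "lcoset u \<Gamma> \<in> \<psi> ` V"
    using h(3)[OF w0] w0 W(2) unfolding u_def by (metis image_eqI subsetD)
  obtain r where r: "r > 0" "inj_on (\<lambda>g. lcoset g \<Gamma>) (SLprod \<inter> ball u r)"
    using discrete_subgroup_lcoset_inj_on[OF \<Gamma> u(1)] by blast
  have cont: "isCont H u" "isCont h (H u)"
    using holo_gv_isCont[OF Ob(3) u(2)] h(1) W(1) w0 continuous_on_eq_continuous_at Hu by auto
  have H_lim: "(H \<longlongrightarrow> H u) (nhds u)"
    using isContD[OF cont(1)] unfolding tendsto_at_iff_tendsto_nhds .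
  have hH_lim: "((\<lambda>g. h (H g)) \<longlongrightarrow> h (H u)) (nhds u)"
    by (rule isCont_tendsto_compose[OF cont(2) H_lim])
  have "eventually (\<lambda>g. g \<in> SLprod \<longrightarrow> lcoset g \<Gamma> \<in> \<psi> ` V) (nhds u)"
    using chart_image_preimage_nhds[OF chart u(1) \<open>lcoset u \<Gamma> \<in> \<psi> ` V\<close>] .
  moreover have "eventually (\<lambda>g. g \<in> Ob \<inter> ball u r) (nhds u)"
    using Ob(1) r(1) u(2) by (intro eventually_nhds_in_open) auto
  moreover have "eventually (\<lambda>g. H g \<in> W) (nhds u)"
    using topological_tendstoD[OF H_lim W(1)] w0 Hu by simp
  moreover have "eventually (\<lambda>g. h (H g) \<in> ball u r) (nhds u)"
    using topological_tendstoD[OF hH_lim open_ball] r(1) Hu u_def by simp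
  ultimately show ?thesis
    unfolding u_def[symmetric]
  proof eventually_elim
    case (elim g)
    show ?case
    proof
      assume g: "g \<in> SLprod"
      then have "H g \<in> V" "\<psi> (H g) = lcoset g \<Gamma>"
        using Ob(4) elim by blast+
      then have "lcoset (h (H g)) \<Gamma> = lcoset g \<Gamma>"
        using h(3) elim by simp
      moreover have "h (H g) \<in> SLprod \<inter> ball u r" "g \<in> SLprod \<inter> ball u r"
        using h(2) elim g by auto
      ultimately have "g = h (H g)"
        using r(2) by (metis inj_onD)
      then show "g \<in> h ` W"
        using elim by blast
    qed
  qed
qed

lemma chart_lift_image_openin:
  assumes "discrete_subgroup \<Gamma>" "is_chart \<Gamma> V \<psi>"
    and W: "open W" "W \<subseteq> V" and h: "continuous_on W h" "h ` W \<subseteq> SLprod"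
    "\<And>w. w \<in> W \<Longrightarrow> \<psi> w = lcoset (h w) \<Gamma>"
  shows "openin (top_of_set SLprod) (h ` W)"
  unfolding openin_subopen[of _ "h ` W"]
proof
  fix u assume "u \<in> h ` W"
  then obtain w0 where w0: "w0 \<in> W" "u = h w0"
    by blast
  obtain S where S: "open S" "u \<in> S" "\<forall>g\<in>S. g \<in> SLprod \<longrightarrow> g \<in> h ` W"
    using chart_lift_fills_nhds[OF assms w0(1)] unfolding eventually_nhds w0(2) by blast
  have "openin (top_of_set SLprod) (SLprod \<inter> S)"
    using S(1) by (rule openin_open_Int)
  then show "\<exists>T. openin (top_of_set SLprod) T \<and> u \<in> T \<and> T \<subseteq> h ` W"
    using S h(2) w0 by blast
qed

lemma is_chart_lift:
  assumes "is_chart \<Gamma> V \<psi>" "z \<in> V"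
  obtains W h where "open W" "z \<in> W" "W \<subseteq> V" "holo_vg W h" "h ` W \<subseteq> SLprod"
    "\<forall>w\<in>W. \<psi> w = lcoset (h w) \<Gamma>"
  using assms unfolding is_chart_def by metis

lemma lift_inverse_chart:
  assumes \<Gamma>: "is_subgroup \<Gamma>" and h: "h ` W \<subseteq> SLprod"
    and N: "open N" "h ` W \<subseteq> N" "inj_on (\<lambda>g. lcoset g \<Gamma>) (SLprod \<inter> N)"
    and inv: "\<And>w. w \<in> W \<Longrightarrow>
      \<exists>Ob H. open Ob \<and> h w \<in> Ob \<and> holo_gv Ob H \<and> (\<forall>w'\<in>W. h w' \<in> Ob \<longrightarrow> H (h w') = w')"
    and g: "lcoset g \<Gamma> \<in> (\<lambda>w. lcoset (h w) \<Gamma>) ` W"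
  shows "\<exists>Ob H. open Ob \<and> g \<in> Ob \<and> holo_gv Ob H \<and>
      (\<forall>g'\<in>Ob \<inter> SLprod. lcoset g' \<Gamma> \<in> (\<lambda>w. lcoset (h w) \<Gamma>) ` W \<longrightarrow>
         H g' \<in> W \<and> lcoset (h (H g')) \<Gamma> = lcoset g' \<Gamma>)"
proof -
  obtain w where w: "w \<in> W" "lcoset g \<Gamma> = lcoset (h w) \<Gamma>"
    using g by blast
  then obtain \<gamma> where \<gamma>: "\<gamma> \<in> \<Gamma>" "h w = gmul g \<gamma>"
    using lcoset_eq_iff[OF \<Gamma>] by blast
  obtain Ob H where Ob: "open Ob" "h w \<in> Ob" "holo_gv Ob H" "\<forall>w'\<in>W. h w' \<in> Ob \<longrightarrow> H (h w') = w'"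
    using inv[OF w(1)] by blast
  define Ob' where "Ob' = (\<lambda>x. gmul x \<gamma>) -` (Ob \<inter> N)"
  have "open Ob'"
    unfolding Ob'_def using Ob(1) N(1) by (intro continuous_open_vimage continuous_gmul_right) auto
  moreover have "g \<in> Ob'"
    unfolding Ob'_def using \<gamma> Ob(2) N(2) w(1) by auto
  moreover have "holo_gv Ob' (\<lambda>x. H (gmul x \<gamma>))"
    by (rule holo_gv_gmul_right[OF Ob(3)]) (simp add: Ob'_def)
  moreover have "H (gmul g' \<gamma>) \<in> W \<and> lcoset (h (H (gmul g' \<gamma>))) \<Gamma> = lcoset g' \<Gamma>"
    if g': "g' \<in> Ob' \<inter> SLprod" "lcoset g' \<Gamma> \<in> (\<lambda>w. lcoset (h w) \<Gamma>) ` W" for g'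
  proof -
    obtain w' where w': "w' \<in> W" "lcoset g' \<Gamma> = lcoset (h w') \<Gamma>"
      using g'(2) by blast
    have x: "gmul g' \<gamma> \<in> SLprod \<inter> N" "gmul g' \<gamma> \<in> Ob"
      using g'(1) \<gamma>(1) subgroup_SLprod[OF \<Gamma>] gmul_in_SLprod unfolding Ob'_def by auto
    have coset: "lcoset (gmul g' \<gamma>) \<Gamma> = lcoset (h w') \<Gamma>"
      using lcoset_gmul[OF \<Gamma> \<gamma>(1)] w'(2) by simp
    have "h w' \<in> SLprod \<inter> N"
      using h N(2) w'(1) by blast
    then have "gmul g' \<gamma> = h w'"
      using inj_onD[OF N(3) coset x(1)] by blast
    then show ?thesis
      using Ob(4) w' x(2) by auto
  qed
  ultimately show ?thesis
    by blast
qed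

lemma lift_is_chart:
  assumes \<Gamma>: "is_subgroup \<Gamma>" and W: "open W"
    and h: "holo_vg W h" "h ` W \<subseteq> SLprod" "openin (top_of_set SLprod) (h ` W)"
    and N: "open N" "h ` W \<subseteq> N" "inj_on (\<lambda>g. lcoset g \<Gamma>) (SLprod \<inter> N)"
    and inv: "\<And>w. w \<in> W \<Longrightarrow>
      \<exists>Ob H. open Ob \<and> h w \<in> Ob \<and> holo_gv Ob H \<and> (\<forall>w'\<in>W. h w' \<in> Ob \<longrightarrow> H (h w') = w')"
  shows "is_chart \<Gamma> W (\<lambda>w. lcoset (h w) \<Gamma>)"
  unfolding is_chart_def
proof (intro conjI)
  show "open W"
    by (fact W)
  show "inj_on (\<lambda>w. lcoset (h w) \<Gamma>) W"
  proof (rule inj_onI)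
    fix w w' assume w: "w \<in> W" "w' \<in> W" "lcoset (h w) \<Gamma> = lcoset (h w') \<Gamma>"
    then have hw: "h w = h w'"
      using inj_onD[OF N(3)] h(2) N(2) by blast
    obtain Ob H where "h w \<in> Ob" "\<forall>w'\<in>W. h w' \<in> Ob \<longrightarrow> H (h w') = w'"
      using inv[OF w(1)] by blast
    then show "w = w'"
      using w hw by metis
  qed
  show "(\<lambda>w. lcoset (h w) \<Gamma>) ` W \<subseteq> quot \<Gamma>"
    using h(2) lcoset_in_quot by blast
  show "openin (qtop \<Gamma>) ((\<lambda>w. lcoset (h w) \<Gamma>) ` W)"
    using openin_qtop_lcoset_image[OF \<Gamma> h(3)] by (simp add: image_image)
  show "\<forall>z\<in>W. \<exists>W' h'. open W' \<and> z \<in> W' \<and> W' \<subseteq> W \<and> holo_vg W' h' \<and> h' ` W' \<subseteq> SLprod \<and>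
      (\<forall>w\<in>W'. lcoset (h w) \<Gamma> = lcoset (h' w) \<Gamma>)"
    using W h(1,2) by (intro ballI exI[of _ W] exI[of _ h]) auto
  show "\<forall>g\<in>SLprod. lcoset g \<Gamma> \<in> (\<lambda>w. lcoset (h w) \<Gamma>) ` W \<longrightarrow>
      (\<exists>Ob H. open Ob \<and> g \<in> Ob \<and> holo_gv Ob H \<and>
        (\<forall>g'\<in>Ob \<inter> SLprod. lcoset g' \<Gamma> \<in> (\<lambda>w. lcoset (h w) \<Gamma>) ` W \<longrightarrow>
           H g' \<in> W \<and> lcoset (h (H g')) \<Gamma> = lcoset g' \<Gamma>))"
    using lift_inverse_chart[OF \<Gamma> h(2) N inv] by blast
qed

lemma chart_transfer:
  assumes \<Gamma>: "discrete_subgroup \<Gamma>" and \<Gamma>': "discrete_subgroup \<Gamma>'"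
    and chart: "is_chart \<Gamma> V \<psi>" and z: "z \<in> V"
  obtains W h where "open W" "z \<in> W" "W \<subseteq> V" "h ` W \<subseteq> SLprod" "\<forall>w\<in>W. \<psi> w = lcoset (h w) \<Gamma>"
    "is_chart \<Gamma>' W (\<lambda>w. lcoset (h w) \<Gamma>')"
proof -
  obtain W0 h where W0: "open W0" "z \<in> W0" "W0 \<subseteq> V" "holo_vg W0 h" "h ` W0 \<subseteq> SLprod"
    "\<forall>w\<in>W0. \<psi> w = lcoset (h w) \<Gamma>"
    by (rule is_chart_lift[OF chart z])
  obtain r where r: "r > 0" "inj_on (\<lambda>g. lcoset g \<Gamma>') (SLprod \<inter> ball (h z) r)"
    using discrete_subgroup_lcoset_inj_on[OF \<Gamma>'] W0(2,5) by blast
  define W where "W = W0 \<inter> h -` ball (h z) r"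
  have "continuous_on W0 h"
    using holo_vg_continuous_on[OF W0(4)] .
  then have "open W"
    unfolding W_def using W0(1) by (rule continuous_open_preimage) simp
  have W: "z \<in> W" "W \<subseteq> V" "W \<subseteq> W0"
    unfolding W_def using W0(2,3) r(1) by auto
  have h: "continuous_on W h" "holo_vg W h" "h ` W \<subseteq> SLprod" "h ` W \<subseteq> ball (h z) r"
    "\<And>w. w \<in> W \<Longrightarrow> \<psi> w = lcoset (h w) \<Gamma>"
    using \<open>continuous_on W0 h\<close> holo_vg_subset[OF W0(4)] W0(5,6) W(3) unfolding W_def
    by (auto intro: continuous_on_subset)
  have "is_chart \<Gamma>' W (\<lambda>w. lcoset (h w) \<Gamma>')"
  proof (rule lift_is_chart[OF discrete_subgroup_is_subgroup[OF \<Gamma>'] \<open>open W\<close> h(2,3) _ open_ball h(4) r(2)])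
    show "openin (top_of_set SLprod) (h ` W)"
      by (rule chart_lift_image_openin[OF \<Gamma> chart \<open>open W\<close> W(2) h(1,3,5)])
    show "\<exists>Ob H. open Ob \<and> h w \<in> Ob \<and> holo_gv Ob H \<and> (\<forall>w'\<in>W. h w' \<in> Ob \<longrightarrow> H (h w') = w')"
      if "w \<in> W" for w
      using chart_lift_inverse[OF chart W(2) h(3,5) that] by metis
  qed
  then show ?thesis
    using that \<open>open W\<close> W(1,2) h(3,5) by blast
qed

lemma commensurable_sym: "commensurable \<Gamma> \<Gamma>' \<Longrightarrow> commensurable \<Gamma>' \<Gamma>"
  unfolding commensurable_def by (simp add: Int_commute)

lemma lcoset_in_Ebdd_commensurable_iff:
  assumes \<Gamma>: "is_subgroup \<Gamma>" "is_subgroup \<Gamma>'" and comm: "commensurable \<Gamma> \<Gamma>'"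
    and F: "F \<subseteq> SLprod" and g: "g \<in> SLprod"
  shows "lcoset g \<Gamma>' \<in> Ebdd F \<Gamma>' \<longleftrightarrow> lcoset g \<Gamma> \<in> Ebdd F \<Gamma>"
proof -
  have "is_subgroup (\<Gamma> \<inter> \<Gamma>')"
    using subgroup_Int[OF \<Gamma>] .
  then interpret \<Gamma>: finite_index_subgroup "\<Gamma> \<inter> \<Gamma>'" \<Gamma>
    + \<Gamma>': finite_index_subgroup "\<Gamma> \<inter> \<Gamma>'" \<Gamma>'
    using \<Gamma> comm unfolding commensurable_def by unfold_locales auto
  show ?thesis
    using \<Gamma>.lcoset_in_Ebdd_iff[OF F g] \<Gamma>'.lcoset_in_Ebdd_iff[OF F g] by simp
qed

lemma HAW_quot_Ebdd_transfer:
  assumes \<Gamma>: "discrete_subgroup \<Gamma>" and \<Gamma>': "discrete_subgroup \<Gamma>'" and comm: "commensurable \<Gamma> \<Gamma>'"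
    and F: "is_subgroup F" and HAW': "HAW_quot \<Gamma>' (Ebdd F \<Gamma>')"
  shows "HAW_quot \<Gamma> (Ebdd F \<Gamma>)"
  unfolding HAW_quot_def
proof (intro allI impI)
  fix V \<psi> assume chart: "is_chart \<Gamma> V \<psi>"
  show "HAW_on V {z \<in> V. \<psi> z \<in> Ebdd F \<Gamma>}"
  proof (rule HAW_on_local)
    fix z assume "z \<in> V"
    then obtain W h where W: "open W" "z \<in> W" "W \<subseteq> V" "h ` W \<subseteq> SLprod"
      "\<forall>w\<in>W. \<psi> w = lcoset (h w) \<Gamma>" "is_chart \<Gamma>' W (\<lambda>w. lcoset (h w) \<Gamma>')"
      by (rule chart_transfer[OF \<Gamma> \<Gamma>' chart])
    have "F \<subseteq> SLprod"
      using subgroup_SLprod[OF F] by blast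
    define T where "T = {w \<in> W. lcoset (h w) \<Gamma>' \<in> Ebdd F \<Gamma>'}"
    have "HAW_on W T"
      using HAW' W(6) unfolding HAW_quot_def T_def by simp
    moreover have "T \<subseteq> {z \<in> V. \<psi> z \<in> Ebdd F \<Gamma>}"
      using lcoset_in_Ebdd_commensurable_iff[OF discrete_subgroup_is_subgroup[OF \<Gamma>]
          discrete_subgroup_is_subgroup[OF \<Gamma>'] comm \<open>F \<subseteq> SLprod\<close>] W(3-5)
      unfolding T_def by auto
    ultimately show "\<exists>W T. open W \<and> z \<in> W \<and> T \<subseteq> {z \<in> V. \<psi> z \<in> Ebdd F \<Gamma>} \<and> HAW_on W T"
      using W(1,2) by blast
  qed
qed

theorem lemma6p1:
  fixes \<Gamma> \<Gamma>' F :: "'k::finite grp set"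
  assumes "lattice \<Gamma>" and "lattice \<Gamma>'" and "commensurable \<Gamma> \<Gamma>'" and "is_subgroup F"
  shows "HAW_quot \<Gamma> (Ebdd F \<Gamma>) \<longleftrightarrow> HAW_quot \<Gamma>' (Ebdd F \<Gamma>')"
proof -
  have "discrete_subgroup \<Gamma>" "discrete_subgroup \<Gamma>'"
    using assms(1,2) unfolding lattice_def by blast+
  then show ?thesis
    using HAW_quot_Ebdd_transfer assms(3,4) commensurable_sym by blast
qed

end
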